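(* Let $G=(V,E)$ be a finite connected undirected graph and let $M \subseteq V$ be the set of marked vertices, where the subgraph of $G$ induced by $M$ is connected. Suppose that the subgraph of $G$ induced by $V \setminus M$ is disconnected. Then the quantum walk search on $G$ with marked set $M$ (as described in the context) has a stationary state.
   Context: Quantum walk search model: the Hilbert space has orthonormal basis $\{|u,v\rangle : \{u,v\}\in E\}$ (one basis vector per arc, i.e. per ordered pair of adjacent vertices). For a vertex $u$ with neighbourhood $N(u)$, let $|s_u\rangle = \frac{1}{\sqrt{\deg_G(u)}}\sum_{v\in N(u)}|u,v\rangle$ and $G_u = 2|s_u\rangle\langle s_u| - I$ (Grover diffusion) acting on $\mathrm{span}\{|u,v\rangle : v\in N(u)\}$. The coin $C$ acts as $G_u$ on the arcs leaving each unmarked vertex $u\notin M$ and as $-G_u$ on the arcs leaving each marked vertex $u\in M$; the flip-flop shift is $S|u,v\rangle = |v,u\rangle$; one step of the walk is $U = SC$. A stationary state is a nonzero vector $|\psi\rangle$ with $U|\psi\rangle = |\psi\rangle$. *)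

theory Defs
  imports Complex_Main
begin

definition simple_graph :: "'a set \<Rightarrow> ('a \<times> 'a) set \<Rightarrow> bool" where
  "simple_graph V E \<longleftrightarrow> finite V \<and> E \<subseteq> V \<times> V \<and> sym E \<and> irrefl E"

definition nbhd :: "('a \<times> 'a) set \<Rightarrow> 'a \<Rightarrow> 'a set" where
  "nbhd E u = {v. (u, v) \<in> E}"

definition deg :: "('a \<times> 'a) set \<Rightarrow> 'a \<Rightarrow> nat" where
  "deg E u = card (nbhd E u)"

definition reach_in :: "('a \<times> 'a) set \<Rightarrow> 'a set \<Rightarrow> 'a \<Rightarrow> 'a \<Rightarrow> bool" where
  "reach_in E S = (\<lambda>x y. x \<in> S \<and> y \<in> S \<and> (x, y) \<in> E)\<^sup>*\<^sup>*"

definition connected_induced :: "('a \<times> 'a) set \<Rightarrow> 'a set \<Rightarrow> bool" where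
  "connected_induced E S \<longleftrightarrow> S \<noteq> {} \<and> (\<forall>x\<in>S. \<forall>y\<in>S. reach_in E S x y)"

definition disconnected_induced :: "('a \<times> 'a) set \<Rightarrow> 'a set \<Rightarrow> bool" where
  "disconnected_induced E S \<longleftrightarrow> (\<exists>x\<in>S. \<exists>y\<in>S. \<not> reach_in E S x y)"

text \<open>States: complex amplitudes on arcs; vectors are functions on pairs vanishing off E.\<close>
definition coin :: "('a \<times> 'a) set \<Rightarrow> 'a set \<Rightarrow> ('a \<times> 'a \<Rightarrow> complex) \<Rightarrow> ('a \<times> 'a \<Rightarrow> complex)" where
  "coin E M \<psi> = (\<lambda>(u, v). if (u, v) \<in> E then
      (if u \<in> M then -1 else 1) *
        ((2 / of_nat (deg E u)) * (\<Sum>w\<in>nbhd E u. \<psi> (u, w)) - \<psi> (u, v))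
      else 0)"

definition shift :: "('a \<times> 'a \<Rightarrow> complex) \<Rightarrow> ('a \<times> 'a \<Rightarrow> complex)" where
  "shift \<phi> = (\<lambda>(u, v). \<phi> (v, u))"

definition walk_op :: "('a \<times> 'a) set \<Rightarrow> 'a set \<Rightarrow> ('a \<times> 'a \<Rightarrow> complex) \<Rightarrow> ('a \<times> 'a \<Rightarrow> complex)" where
  "walk_op E M \<psi> = shift (coin E M \<psi>)"

definition is_state :: "('a \<times> 'a) set \<Rightarrow> ('a \<times> 'a \<Rightarrow> complex) \<Rightarrow> bool" where
  "is_state E \<psi> \<longleftrightarrow> (\<forall>a. a \<notin> E \<longrightarrow> \<psi> a = 0)"

definition stationary_state :: "('a \<times> 'a) set \<Rightarrow> 'a set \<Rightarrow> ('a \<times> 'a \<Rightarrow> complex) \<Rightarrow> bool" where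
  "stationary_state E M \<psi> \<longleftrightarrow> is_state E \<psi> \<and> \<psi> \<noteq> (\<lambda>_. 0) \<and> walk_op E M \<psi> = \<psi>"

end

theory Submission
  imports Defs "HOL-Library.Indicator_Function"
begin

text \<open>A state equal to c(u) on every arc at an unmarked vertex u (in both directions) is fixed
  by the Grover coin there as soon as c is constant along unmarked edges, i.e. on the components
  of G[V - M]. At a marked vertex v the coin -G_v fixes every vector whose entries sum to zero, so
  on the arcs inside M one needs symmetric weights x with
  sum_{w in N(v) cap M} x(v,w) = - sum_{w in N(v) - M} c(w).
  Because G[M] is connected, walks in G[M] put every delta_r - (+-1) delta_m into the image of the
  unsigned incidence map of G[M], so this image has codimension at most one. Two components of
  G[V - M] give a two-dimensional space of admissible c, hence a nonzero c meeting the single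
  remaining linear condition.\<close>

definition incidence_image :: "('a \<times> 'a) set \<Rightarrow> 'a set \<Rightarrow> ('a \<Rightarrow> complex) set" where
  "incidence_image E M = {f. \<exists>x. (\<forall>a b. x (a, b) = x (b, a)) \<and>
      (\<forall>v\<in>M. f v = (\<Sum>w\<in>nbhd E v \<inter> M. x (v, w)))}"

lemma incidence_image_zero: "(\<lambda>_. 0) \<in> incidence_image E M"
  unfolding incidence_image_def by (rule CollectI, rule exI[of _ "\<lambda>_. 0"]) simp

lemma incidence_image_add:
  assumes "f \<in> incidence_image E M" and "g \<in> incidence_image E M"
  shows "(\<lambda>v. f v + g v) \<in> incidence_image E M"
proof -
  obtain x y where "\<forall>a b. x (a, b) = x (b, a)" "\<forall>v\<in>M. f v = (\<Sum>w\<in>nbhd E v \<inter> M. x (v, w))"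
    and "\<forall>a b. y (a, b) = y (b, a)" "\<forall>v\<in>M. g v = (\<Sum>w\<in>nbhd E v \<inter> M. y (v, w))"
    using assms unfolding incidence_image_def by blast
  then show ?thesis unfolding incidence_image_def
    by (intro CollectI exI[of _ "\<lambda>z. x z + y z"]) (simp add: sum.distrib)
qed

lemma incidence_image_scale:
  assumes "f \<in> incidence_image E M"
  shows "(\<lambda>v. a * f v) \<in> incidence_image E M"
proof -
  obtain x where "\<forall>a b. x (a, b) = x (b, a)" "\<forall>v\<in>M. f v = (\<Sum>w\<in>nbhd E v \<inter> M. x (v, w))"
    using assms unfolding incidence_image_def by blast
  then show ?thesis unfolding incidence_image_def
    by (intro CollectI exI[of _ "\<lambda>z. a * x z"]) (simp add: sum_distrib_left)
qed

lemma incidence_image_sum: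
  assumes "finite A" and "\<And>i. i \<in> A \<Longrightarrow> F i \<in> incidence_image E M"
  shows "(\<lambda>v. \<Sum>i\<in>A. F i v) \<in> incidence_image E M"
  using assms by (induction A rule: finite_induct) (simp_all add: incidence_image_zero incidence_image_add)

lemma incidence_image_cong:
  assumes "f \<in> incidence_image E M" and "\<And>v. v \<in> M \<Longrightarrow> g v = f v"
  shows "g \<in> incidence_image E M"
  using assms unfolding incidence_image_def by auto

lemma incidence_image_edge:
  assumes "(m, m') \<in> E" "m \<noteq> m'" "m \<in> M" "m' \<in> M" "sym E" "finite M"
  shows "(\<lambda>v. indicator {m} v + indicator {m'} v) \<in> incidence_image E M"
proof -
  define x where "x = (indicator {(m, m'), (m', m)} :: _ \<Rightarrow> complex)"
  have "(m', m) \<in> E" using assms(1,5) by (meson symD)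
  have "(\<Sum>w\<in>nbhd E v \<inter> M. x (v, w)) = indicator {m} v + indicator {m'} v" for v
  proof -
    have "(\<Sum>w\<in>nbhd E v \<inter> M. x (v, w)) =
        (\<Sum>w\<in>nbhd E v \<inter> M. if v = m \<and> w = m' then 1 else 0) +
        (\<Sum>w\<in>nbhd E v \<inter> M. if v = m' \<and> w = m then 1 else 0)"
      unfolding sum.distrib[symmetric] by (rule sum.cong) (use assms(2) in \<open>auto simp: x_def\<close>)
    also have "\<dots> = indicator {m} v + indicator {m'} v"
      using assms \<open>(m', m) \<in> E\<close> by (cases "v = m"; cases "v = m'") (auto simp: nbhd_def)
    finally show ?thesis .
  qed
  moreover have "x (a, b) = x (b, a)" for a b
    unfolding x_def indicator_def by auto
  ultimately show ?thesis
    unfolding incidence_image_def by (intro CollectI exI[of _ x]) simp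
qed

lemma reach_in_signed_indicator_diff:
  assumes "reach_in E M r m" "r \<in> M" "sym E" "finite M"
  shows "\<exists>s. (s = 1 \<or> s = -1) \<and>
    (\<lambda>v. indicator {r} v - s * indicator {m} v) \<in> incidence_image E M"
  using assms(1) unfolding reach_in_def
proof (induction rule: rtranclp_induct)
  case base
  show ?case by (intro exI[of _ 1]) (simp add: incidence_image_zero)
next
  case (step m m')
  then obtain s where s: "s = 1 \<or> s = -1"
    and diff: "(\<lambda>v. indicator {r} v - s * indicator {m} v) \<in> incidence_image E M"
    by blast
  show ?case
  proof (cases "m = m'")
    case False
    then have "(\<lambda>v. indicator {m} v + indicator {m'} v) \<in> incidence_image E M"
      using incidence_image_edge[of m m' E M] step(2) assms(3,4) by simp
    from incidence_image_add[OF diff incidence_image_scale[OF this, of s]]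
    have "(\<lambda>v. indicator {r} v - (-s) * indicator {m'} v) \<in> incidence_image E M"
      by (simp add: algebra_simps)
    then show ?thesis using s by (intro exI[of _ "-s"]) auto
  qed (use s diff in blast)
qed

text \<open>Walks from r give delta_r - s_m delta_m with signs s_m = +-1 in the image, and any b with
  sum_m s_m b_m = 0 is the combination sum_m (- s_m b_m)(delta_r - s_m delta_m) on M.\<close>
lemma connected_incidence_image_contains_hyperplane:
  assumes "connected_induced E M" "sym E" "finite M"
  obtains s :: "'a \<Rightarrow> complex"
  where "\<And>b. (\<Sum>m\<in>M. s m * b m) = 0 \<Longrightarrow> b \<in> incidence_image E M"
proof -
  obtain r where r: "r \<in> M" and reach: "\<And>m. m \<in> M \<Longrightarrow> reach_in E M r m"
    using assms(1) unfolding connected_induced_def by blast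
  obtain s where s: "\<And>m. m \<in> M \<Longrightarrow> s m = 1 \<or> s m = -1"
    and diff: "\<And>m. m \<in> M \<Longrightarrow>
      (\<lambda>v. indicator {r} v - s m * indicator {m} v) \<in> incidence_image E M"
    using reach_in_signed_indicator_diff[OF reach r assms(2,3)] by metis
  have "b \<in> incidence_image E M" if b: "(\<Sum>m\<in>M. s m * b m) = 0" for b
  proof (rule incidence_image_cong)
    let ?g = "\<lambda>v. \<Sum>m\<in>M. (- s m * b m) * (indicator {r} v - s m * indicator {m} v)"
    show "?g \<in> incidence_image E M"
      using assms(3) diff by (intro incidence_image_sum incidence_image_scale)
    fix v assume v: "v \<in> M"
    have "?g v = (\<Sum>m\<in>M. - (s m * b m) * indicator {r} v)
        + (\<Sum>m\<in>M. (s m * s m) * b m * indicator {m} v)"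
      by (simp add: sum.distrib[symmetric] algebra_simps)
    also have "(\<Sum>m\<in>M. - (s m * b m) * indicator {r} v) = 0"
      using b by (simp add: sum_distrib_right[symmetric] sum_negf)
    also have "(\<Sum>m\<in>M. (s m * s m) * b m * indicator {m} v) = (\<Sum>m\<in>M. if m = v then b v else 0)"
      using s[OF v] by (intro sum.cong) (auto simp: indicator_def)
    finally show "b v = ?g v" using v assms(3) by simp
  qed
  then show thesis by (rule that)
qed

lemma walk_op_fixed:
  assumes "sym E" and fin: "\<And>v. finite (nbhd E v)" and "is_state E \<psi>"
    and unmarked: "\<And>v u w. v \<notin> M \<Longrightarrow> u \<in> nbhd E v \<Longrightarrow> w \<in> nbhd E v \<Longrightarrow> \<psi> (v, w) = \<psi> (u, v)"
    and marked_sym: "\<And>v u. v \<in> M \<Longrightarrow> u \<in> nbhd E v \<Longrightarrow> \<psi> (v, u) = \<psi> (u, v)"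
    and marked_sum: "\<And>v. v \<in> M \<Longrightarrow> (\<Sum>w\<in>nbhd E v. \<psi> (v, w)) = 0"
  shows "walk_op E M \<psi> = \<psi>"
proof (rule ext, clarify)
  fix u v
  show "walk_op E M \<psi> (u, v) = \<psi> (u, v)"
  proof (cases "u \<in> nbhd E v")
    case False
    then have "(u, v) \<notin> E" using \<open>sym E\<close> by (auto simp: nbhd_def dest: symD)
    then show ?thesis
      using False \<open>is_state E \<psi>\<close> by (simp add: walk_op_def shift_def coin_def nbhd_def is_state_def)
  next
    case u: True
    have walk: "walk_op E M \<psi> (u, v) = (if v \<in> M then -1 else 1) *
        ((2 / of_nat (deg E v)) * (\<Sum>w\<in>nbhd E v. \<psi> (v, w)) - \<psi> (v, u))"
      using u by (simp add: walk_op_def shift_def coin_def nbhd_def)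
    show ?thesis
    proof (cases "v \<in> M")
      case True
      then show ?thesis using walk marked_sum[OF True] marked_sym[OF True u] by simp
    next
      case False
      have "deg E v \<noteq> 0" using u fin by (auto simp: deg_def)
      moreover have "(\<Sum>w\<in>nbhd E v. \<psi> (v, w)) = of_nat (deg E v) * \<psi> (u, v)"
        using unmarked[OF False u] by (simp add: deg_def)
      ultimately show ?thesis using walk unmarked[OF False u u] False by simp
    qed
  qed
qed

definition glued_state ::
    "('a \<times> 'a) set \<Rightarrow> 'a set \<Rightarrow> ('a \<Rightarrow> complex) \<Rightarrow> ('a \<times> 'a \<Rightarrow> complex) \<Rightarrow> ('a \<times> 'a \<Rightarrow> complex)" where
  "glued_state E M c x = (\<lambda>(u, v). if (u, v) \<in> E then
      (if u \<notin> M then c u else if v \<notin> M then c v else x (u, v)) else 0)"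

lemma glued_state_stationary:
  assumes "sym E" and fin: "\<And>v. finite (nbhd E v)"
    and c_const: "\<And>u v. (u, v) \<in> E \<Longrightarrow> u \<notin> M \<Longrightarrow> v \<notin> M \<Longrightarrow> c u = c v"
    and x_sym: "\<And>a b. x (a, b) = x (b, a)"
    and balance: "\<And>v. v \<in> M \<Longrightarrow> (\<Sum>w\<in>nbhd E v \<inter> M. x (v, w)) + (\<Sum>w\<in>nbhd E v - M. c w) = 0"
  shows "walk_op E M (glued_state E M c x) = glued_state E M c x"
proof (rule walk_op_fixed[OF \<open>sym E\<close> fin])
  have edge_sym: "(u, v) \<in> E" if "u \<in> nbhd E v" for u v
    using that \<open>sym E\<close> by (auto simp: nbhd_def dest: symD)
  show "is_state E (glued_state E M c x)"
    by (simp add: is_state_def glued_state_def)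
  show "glued_state E M c x (v, w) = glued_state E M c x (u, v)"
    if "v \<notin> M" "u \<in> nbhd E v" "w \<in> nbhd E v" for v u w
    using that c_const[of u v] edge_sym[of u v] by (auto simp: glued_state_def nbhd_def)
  show "glued_state E M c x (v, u) = glued_state E M c x (u, v)"
    if "v \<in> M" "u \<in> nbhd E v" for v u
    using that x_sym edge_sym[of u v] by (auto simp: glued_state_def nbhd_def)
  show "(\<Sum>w\<in>nbhd E v. glued_state E M c x (v, w)) = 0" if v: "v \<in> M" for v
  proof -
    have "(\<Sum>w\<in>nbhd E v. glued_state E M c x (v, w)) =
        (\<Sum>w\<in>nbhd E v \<inter> M. glued_state E M c x (v, w)) + (\<Sum>w\<in>nbhd E v - M. glued_state E M c x (v, w))"
      using fin by (rule sum.Int_Diff)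
    also have "\<dots> = (\<Sum>w\<in>nbhd E v \<inter> M. x (v, w)) + (\<Sum>w\<in>nbhd E v - M. c w)"
      using v by (intro arg_cong2[where f = "(+)"] sum.cong) (auto simp: glued_state_def nbhd_def)
    finally show ?thesis using balance v by simp
  qed
qed

lemma stationary_state_of_balanced_weights:
  assumes "sym E" and fin: "\<And>v. finite (nbhd E v)"
    and c_const: "\<And>u v. (u, v) \<in> E \<Longrightarrow> u \<notin> M \<Longrightarrow> v \<notin> M \<Longrightarrow> c u = c v"
    and inflow: "(\<lambda>v. - (\<Sum>w\<in>nbhd E v - M. c w)) \<in> incidence_image E M"
    and "(a, y) \<in> E" "a \<notin> M" "c a \<noteq> 0"
  shows "\<exists>\<psi>. stationary_state E M \<psi>"
proof -
  obtain x where x_sym: "\<And>a b. x (a, b) = x (b, a)"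
    and x_sum: "\<And>v. v \<in> M \<Longrightarrow> - (\<Sum>w\<in>nbhd E v - M. c w) = (\<Sum>w\<in>nbhd E v \<inter> M. x (v, w))"
    using inflow unfolding incidence_image_def by blast
  have balance: "(\<Sum>w\<in>nbhd E v \<inter> M. x (v, w)) + (\<Sum>w\<in>nbhd E v - M. c w) = 0" if "v \<in> M" for v
    using x_sum[OF that, symmetric] by simp
  have "walk_op E M (glued_state E M c x) = glued_state E M c x"
    using assms(1) fin c_const x_sym balance by (rule glued_state_stationary)
  moreover have "glued_state E M c x (a, y) \<noteq> 0"
    using assms(5-7) by (simp add: glued_state_def)
  then have "glued_state E M c x \<noteq> (\<lambda>_. 0)" by force
  moreover have "is_state E (glued_state E M c x)"
    by (simp add: is_state_def glued_state_def)
  ultimately show ?thesis unfolding stationary_state_def by blast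
qed

lemma reach_in_edge_iff:
  assumes "sym E" "(u, v) \<in> E" "u \<in> S" "v \<in> S"
  shows "reach_in E S a u \<longleftrightarrow> reach_in E S a v"
proof -
  have "(v, u) \<in> E" using assms(1,2) by (rule symD)
  then show ?thesis
    using assms(2-4) unfolding reach_in_def by (auto intro: rtranclp.rtrancl_into_rtrancl)
qed

text \<open>c is taken as a combination of the indicators of the components of p and q.\<close>
lemma component_constant_in_kernel:
  fixes L :: "('a \<Rightarrow> complex) \<Rightarrow> complex"
  assumes linear: "\<And>\<alpha> \<beta> f g. L (\<lambda>w. \<alpha> * f w + \<beta> * g w) = \<alpha> * L f + \<beta> * L g"
    and "sym E" "p \<in> S" "q \<in> S" "\<not> reach_in E S p q"
  obtains c where "\<And>u v. (u, v) \<in> E \<Longrightarrow> u \<in> S \<Longrightarrow> v \<in> S \<Longrightarrow> c u = c v"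
    and "L c = 0" and "c p \<noteq> 0 \<or> c q \<noteq> 0"
proof -
  define comp :: "'a \<Rightarrow> 'a \<Rightarrow> complex" where "comp a = indicator (Collect (reach_in E S a))" for a
  obtain \<alpha> \<beta> where ab: "\<alpha> * L (comp p) + \<beta> * L (comp q) = 0" and nontrivial: "\<alpha> \<noteq> 0 \<or> \<beta> \<noteq> 0"
  proof (cases "L (comp p) = 0 \<and> L (comp q) = 0")
    case True
    then show ?thesis by (intro that[of 1 0]) simp_all
  next
    case False
    then show ?thesis by (intro that[of "L (comp q)" "- L (comp p)"]) (auto simp: algebra_simps)
  qed
  define c where "c = (\<lambda>w. \<alpha> * comp p w + \<beta> * comp q w)"
  show thesis
  proof (rule that[of c])
    show "c u = c v" if "(u, v) \<in> E" "u \<in> S" "v \<in> S" for u v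
      using reach_in_edge_iff[OF assms(2) that] by (simp add: c_def comp_def indicator_def)
    show "L c = 0" using ab by (simp add: c_def linear)
    have "reach_in E S p p" "reach_in E S q q" by (simp_all add: reach_in_def)
    then show "c p \<noteq> 0 \<or> c q \<noteq> 0"
      using nontrivial assms(5) by (auto simp: c_def comp_def)
  qed
qed

lemma connected_induced_nbhd_nonempty:
  assumes "connected_induced E S" "a \<in> S" "a' \<in> S" "a \<noteq> a'"
  shows "nbhd E a \<noteq> {}"
proof -
  have "reach_in E S a a'" using assms(1-3) unfolding connected_induced_def by blast
  then show ?thesis
    unfolding reach_in_def by (rule converse_rtranclpE) (use assms(4) in \<open>auto simp: nbhd_def\<close>)
qed

theorem theorem3:
  fixes V :: "'a set" and E :: "('a \<times> 'a) set" and M :: "'a set"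
  assumes "simple_graph V E"
    and "connected_induced E V"
    and "M \<subseteq> V"
    and "connected_induced E M"
    and "disconnected_induced E (V - M)"
  shows "\<exists>\<psi>. stationary_state E M \<psi>"
proof -
  have sE: "sym E" and EV: "E \<subseteq> V \<times> V" and finV: "finite V"
    using assms(1) by (auto simp: simple_graph_def)
  have fin: "finite (nbhd E v)" for v
    using EV finV by (auto simp: nbhd_def intro: finite_subset)
  have finM: "finite M" using finV assms(3) by (rule rev_finite_subset)
  obtain p q where p: "p \<in> V - M" and q: "q \<in> V - M" and npq: "\<not> reach_in E (V - M) p q"
    using assms(5) unfolding disconnected_induced_def by blast
  obtain s where hyperplane: "\<And>b. (\<Sum>m\<in>M. s m * b m) = 0 \<Longrightarrow> b \<in> incidence_image E M"
    using connected_incidence_image_contains_hyperplane[OF assms(4) sE finM] by blast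
  obtain c where c_const: "\<And>u v. (u, v) \<in> E \<Longrightarrow> u \<in> V - M \<Longrightarrow> v \<in> V - M \<Longrightarrow> c u = c v"
    and kernel: "(\<Sum>m\<in>M. s m * (\<Sum>w\<in>nbhd E m - M. c w)) = 0" and "c p \<noteq> 0 \<or> c q \<noteq> 0"
    by (rule component_constant_in_kernel[OF _ sE p q npq,
          where L = "\<lambda>c. \<Sum>m\<in>M. s m * (\<Sum>w\<in>nbhd E m - M. c w)"])
      (auto simp: sum.distrib sum_distrib_left algebra_simps)
  then obtain a where a: "a \<in> {p, q}" "c a \<noteq> 0" by blast
  obtain y where "(a, y) \<in> E"
    using a p q npq connected_induced_nbhd_nonempty[OF assms(2), of a]
    by (auto simp: nbhd_def reach_in_def)
  show ?thesis
  proof (rule stationary_state_of_balanced_weights[OF sE fin _ hyperplane \<open>(a, y) \<in> E\<close>])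
    show "c u = c v" if "(u, v) \<in> E" "u \<notin> M" "v \<notin> M" for u v
      using that EV c_const by blast
    show "(\<Sum>m\<in>M. s m * - (\<Sum>w\<in>nbhd E m - M. c w)) = 0"
      using kernel by (simp add: sum_negf)
  qed (use a p q in auto)
qed

end
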